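(* Let $S=\{n_0<n_1<n_2<\cdots\}$ be an infinite subset of the positive integers with unbounded gaps, i.e. $\sup_i (n_{i+1}-n_i)=\infty$. Then the $S$-gap shift $X(S)$ does not admit a Gibbs state.
   Context: For nonempty $S$, the $S$-gap shift $X(S)\subseteq\{0,1\}^{\mathbb{Z}}$ is the set of bi-infinite binary sequences in which every maximal block of consecutive zeros (between two ones) has length belonging to $S$; typical points have the form $\cdots10^{n_{-1}}10^{n_0}10^{n_1}\cdots$ with $n_j\in S$. $\mathcal{B}_r(X)$ is the set of words of length $r$ occurring in points of $X$, $h(X)=\lim_r\frac1r\log|\mathcal{B}_r(X)|$ with $\log$ to base $2$, and $[\omega]$ is the cylinder set of points having $\omega$ at a fixed position. A Borel probability measure $\mu$ on $X$ is a Gibbs state if there exist $c_1,c_2>0$ such that for all words $\omega\in\mathcal{B}(X)$ of length $r$, $c_1\le\mu([\omega])\,2^{r h(X)}\le c_2$. *)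

theory Defs
  imports "HOL-Analysis.Analysis" "HOL-Probability.Probability"
begin

text \<open>Points of the full shift are bi-infinite binary sequences, encoded as
  functions int to bool (True = symbol 1, False = symbol 0). The full shift
  carries the product topology (library instance for function types).\<close>

definition gap_shift :: "nat set \<Rightarrow> (int \<Rightarrow> bool) set" where
  "gap_shift S = {x. \<forall>i j. i < j \<and> x i \<and> x j \<and> (\<forall>k. i < k \<and> k < j \<longrightarrow> \<not> x k)
                        \<longrightarrow> nat (j - i - 1) \<in> S}"

definition words_of_len :: "nat \<Rightarrow> (int \<Rightarrow> bool) set \<Rightarrow> bool list set" where
  "words_of_len r X = {w. length w = r \<and> (\<exists>x\<in>X. \<exists>n::int. \<forall>k<r. w ! k = x (n + int k))}"

definition lang :: "(int \<Rightarrow> bool) set \<Rightarrow> bool list set" where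
  "lang X = (\<Union>r. words_of_len r X)"

definition entropy :: "(int \<Rightarrow> bool) set \<Rightarrow> real" where
  "entropy X = lim (\<lambda>r. log 2 (real (card (words_of_len r X))) / real r)"

definition cyl :: "(int \<Rightarrow> bool) set \<Rightarrow> bool list \<Rightarrow> (int \<Rightarrow> bool) set" where
  "cyl X w = {x\<in>X. \<forall>k<length w. x (int k) = w ! k}"

definition is_gibbs_state :: "(int \<Rightarrow> bool) set \<Rightarrow> (int \<Rightarrow> bool) measure \<Rightarrow> bool" where
  "is_gibbs_state X \<mu> \<longleftrightarrow>
     prob_space \<mu> \<and> sets \<mu> = sets (restrict_space borel X) \<and>
     (\<exists>c1 c2 :: real. c1 > 0 \<and> c2 > 0 \<and>
        (\<forall>w\<in>lang X. c1 \<le> measure \<mu> (cyl X w) * 2 powr (real (length w) * entropy X)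
                   \<and> measure \<mu> (cyl X w) * 2 powr (real (length w) * entropy X) \<le> c2))"

end

theory Submission
  imports Defs
begin

text \<open>A Gibbs state gives every cylinder of length r mass comparable to 2^(-r h).
  If h \<le> 0 this bounds the number of words of each length, whereas X(S) has at least r
  words of length r; hence h > 0. Now take consecutive elements a < b of S. In a point
  of X(S) the block 1 0^(a+1) can only continue with zeros up to position b, so the
  cylinder of 1 0^(a+1) lies inside that of 1 0^b. The Gibbs bounds then force
  2^((b-a-1) h) \<le> c2/c1, so the gaps of S would be bounded.\<close>

lemma enumerate_not_between:
  fixes S :: "nat set"
  assumes "infinite S" "s \<in> S"
  shows "s \<le> enumerate S i \<or> enumerate S (Suc i) \<le> s"
proof -
  obtain k where k: "enumerate S k = s" using enumerate_Ex[OF assms] by blast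
  have "strict_mono (enumerate S)" using strict_mono_enumerate[OF assms(1)] .
  then show ?thesis
    using k by (cases "k \<le> i") (auto simp: strict_mono_less_eq not_le Suc_le_eq)
qed

lemma cyl_disjoint:
  assumes "length v = length w" "v \<noteq> w"
  shows "cyl X v \<inter> cyl X w = {}"
  using assms nth_equalityI[of v w] unfolding cyl_def by auto

lemma words_of_len_subset_lang: "words_of_len r X \<subseteq> lang X"
  unfolding lang_def by blast

lemma finite_words_of_len: "finite (words_of_len r X)"
proof (rule finite_subset)
  show "words_of_len r X \<subseteq> {w. set w \<subseteq> UNIV \<and> length w = r}"
    unfolding words_of_len_def by auto
qed (rule finite_lists_length_eq, simp)

lemma gibbs_stateE:
  assumes "is_gibbs_state X \<mu>"
  obtains c1 c2 :: real where "prob_space \<mu>" "c1 > 0" "c2 > 0"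
    "\<And>w. w \<in> lang X \<Longrightarrow> c1 \<le> measure \<mu> (cyl X w) * 2 powr (real (length w) * entropy X)"
    "\<And>w. w \<in> lang X \<Longrightarrow> measure \<mu> (cyl X w) * 2 powr (real (length w) * entropy X) \<le> c2"
  using assms unfolding is_gibbs_state_def by blast

lemma gibbs_cyl_in_sets:
  assumes "is_gibbs_state X \<mu>" "w \<in> lang X"
  shows "cyl X w \<in> sets \<mu>"
proof (rule ccontr)
  obtain c1 :: real where "c1 > 0"
    "c1 \<le> measure \<mu> (cyl X w) * 2 powr (real (length w) * entropy X)"
    using gibbs_stateE[OF assms(1)] assms(2) by metis
  moreover assume "cyl X w \<notin> sets \<mu>"
  ultimately show False by (simp add: measure_notin_sets)
qed

lemma gibbs_card_words_of_len_bounded: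
  assumes gibbs: "is_gibbs_state X \<mu>" and h_nonpos: "entropy X \<le> 0"
  shows "\<exists>C. \<forall>r. real (card (words_of_len r X)) \<le> C"
proof -
  obtain c1 :: real where "prob_space \<mu>" and c1: "c1 > 0" and
    lower: "\<And>w. w \<in> lang X \<Longrightarrow> c1 \<le> measure \<mu> (cyl X w) * 2 powr (real (length w) * entropy X)"
    using gibbs_stateE[OF gibbs] by metis
  define h where "h = entropy X"
  interpret prob_space \<mu> by fact
  have "real (card (words_of_len r X)) * c1 \<le> 1" for r
  proof -
    let ?W = "words_of_len r X"
    have "c1 \<le> prob (cyl X w)" if "w \<in> ?W" for w
    proof -
      have "real r * h \<le> 0"
        using h_nonpos by (simp add: h_def mult_nonneg_nonpos)
      then have "2 powr (real r * h) \<le> 1"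
        using powr_mono[of "real r * h" 0 2] by simp
      then have "prob (cyl X w) * 2 powr (real r * h) \<le> prob (cyl X w)"
        by (simp add: mult_left_le)
      moreover have "length w = r" using that unfolding words_of_len_def by simp
      ultimately show ?thesis using lower that words_of_len_subset_lang h_def by fastforce
    qed
    then have "real (card ?W) * c1 \<le> (\<Sum>w\<in>?W. prob (cyl X w))"
      using sum_mono[of ?W "\<lambda>_. c1"] by simp
    also have "\<dots> = prob (\<Union>w\<in>?W. cyl X w)"
    proof (rule finite_measure_finite_Union[symmetric])
      show "(\<lambda>w. cyl X w) ` ?W \<subseteq> events"
        using gibbs_cyl_in_sets[OF gibbs] words_of_len_subset_lang by blast
      show "disjoint_family_on (\<lambda>w. cyl X w) ?W"
        unfolding disjoint_family_on_def by (auto intro!: cyl_disjoint simp: words_of_len_def)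
    qed (rule finite_words_of_len)
    also have "\<dots> \<le> 1" by (rule prob_le_1)
    finally show ?thesis .
  qed
  then have "real (card (words_of_len r X)) \<le> 1 / c1" for r
    using c1 by (simp add: pos_le_divide_eq)
  then show ?thesis by blast
qed

lemma gibbs_cyl_subset_length_bound:
  assumes gibbs: "is_gibbs_state X \<mu>" and h_pos: "entropy X > 0"
  shows "\<exists>C. \<forall>v\<in>lang X. \<forall>w\<in>lang X. cyl X v \<subseteq> cyl X w \<longrightarrow>
                real (length w) \<le> real (length v) + C"
proof -
  obtain c1 c2 :: real where "prob_space \<mu>" and c1: "c1 > 0" and c2: "c2 > 0" and
    lower: "\<And>w. w \<in> lang X \<Longrightarrow> c1 \<le> measure \<mu> (cyl X w) * 2 powr (real (length w) * entropy X)" and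
    upper: "\<And>w. w \<in> lang X \<Longrightarrow> measure \<mu> (cyl X w) * 2 powr (real (length w) * entropy X) \<le> c2"
    using gibbs_stateE[OF gibbs] by metis
  define h where "h = entropy X"
  interpret prob_space \<mu> by fact
  have "real (length w) \<le> real (length v) + log 2 (c2 / c1) / h"
    if v: "v \<in> lang X" and w: "w \<in> lang X" and sub: "cyl X v \<subseteq> cyl X w" for v w
  proof -
    have "prob (cyl X v) \<le> prob (cyl X w)"
      using sub gibbs_cyl_in_sets[OF gibbs w] by (rule finite_measure_mono)
    then have "c1 \<le> prob (cyl X w) * 2 powr (real (length v) * h)"
      using lower[OF v] h_def by (smt (verit) mult_right_mono powr_ge_zero)
    then have "c1 * 2 powr ((real (length w) - real (length v)) * h)
        \<le> prob (cyl X w) * 2 powr (real (length v) * h) * 2 powr ((real (length w) - real (length v)) * h)"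
      by (rule mult_right_mono) simp
    also have "\<dots> = prob (cyl X w) * 2 powr (real (length w) * h)"
      by (simp add: powr_add[symmetric] algebra_simps)
    also have "\<dots> \<le> c2"
      using upper[OF w] h_def by simp
    finally have "c1 * 2 powr ((real (length w) - real (length v)) * h) \<le> c2" .
    then have "2 powr ((real (length w) - real (length v)) * h) \<le> c2 / c1"
      using c1 by (simp add: field_simps)
    then have "(real (length w) - real (length v)) * h \<le> log 2 (c2 / c1)"
      using c1 c2 by (simp add: le_log_iff)
    then have "real (length w) - real (length v) \<le> log 2 (c2 / c1) / h"
      using h_pos h_def by (simp add: pos_le_divide_eq)
    then show ?thesis by simp
  qed
  then show ?thesis unfolding h_def by blast
qed

lemma gap_shift_gap_in:
  assumes "x \<in> gap_shift S" "i < j" "x i" "x j" "\<And>k. i < k \<Longrightarrow> k < j \<Longrightarrow> \<not> x k"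
  shows "nat (j - i - 1) \<in> S"
  using assms unfolding gap_shift_def by blast

lemma indicator_in_gap_shift: "(\<lambda>k::int. k = j) \<in> gap_shift S"
  unfolding gap_shift_def by auto

definition indicator_word :: "nat \<Rightarrow> nat \<Rightarrow> bool list" where
  "indicator_word r j = map (\<lambda>k. k = j) [0..<r]"

lemma length_indicator_word [simp]: "length (indicator_word r j) = r"
  by (simp add: indicator_word_def)

lemma nth_indicator_word [simp]: "k < r \<Longrightarrow> indicator_word r j ! k = (k = j)"
  by (simp add: indicator_word_def)

lemma indicator_word_in_words_of_len: "indicator_word r j \<in> words_of_len r (gap_shift S)"
  unfolding words_of_len_def
  by (auto intro!: bexI[OF _ indicator_in_gap_shift[of "int j"]] exI[of _ 0])

lemma card_words_of_len_gap_shift: "r \<le> card (words_of_len r (gap_shift S))"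
proof -
  have "inj_on (indicator_word r) {..<r}"
    by (rule inj_onI) (metis lessThan_iff nth_indicator_word)
  moreover have "indicator_word r ` {..<r} \<subseteq> words_of_len r (gap_shift S)"
    using indicator_word_in_words_of_len by blast
  ultimately show ?thesis
    using card_inj_on_le[OF _ _ finite_words_of_len] by fastforce
qed

lemma gibbs_gap_shift_entropy_pos:
  assumes "is_gibbs_state (gap_shift S) \<mu>"
  shows "entropy (gap_shift S) > 0"
proof (rule ccontr)
  assume "\<not> entropy (gap_shift S) > 0"
  then obtain C where "\<And>r. real (card (words_of_len r (gap_shift S))) \<le> C"
    using gibbs_card_words_of_len_bounded[OF assms] by force
  then have "real r \<le> C" for r
    using card_words_of_len_gap_shift[of r S] by (meson of_nat_le_iff order_trans)
  then show False using reals_Archimedean2[of C] by (meson not_less)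
qed

text \<open>In a point with 1 0^(a+1) at position 0, the next symbol 1 sits at some q > a + 1,
  and q - 1 \<in> S; so if S has no element strictly between a and b, then q > b.\<close>

lemma cyl_gap_shift_subset:
  assumes gap: "\<forall>s\<in>S. s \<le> a \<or> b \<le> s"
  shows "cyl (gap_shift S) (indicator_word (a + 2) 0)
           \<subseteq> cyl (gap_shift S) (indicator_word (b + 1) 0)"
proof
  fix x assume "x \<in> cyl (gap_shift S) (indicator_word (a + 2) 0)"
  then have xX: "x \<in> gap_shift S" and x0: "x 0" and
    zeros: "\<And>k. 0 < k \<Longrightarrow> k \<le> a + 1 \<Longrightarrow> \<not> x (int k)"
    unfolding cyl_def by (auto dest!: spec[of _ 0] dest: spec[of _ "Suc _"] simp: less_Suc_eq_le)
  have "\<not> x (int p)" if p: "0 < p" "p \<le> b" for p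
  proof
    assume "x (int p)"
    then have ex: "\<exists>p. 0 < p \<and> x (int p)" using p by blast
    define q where "q = (LEAST p. 0 < p \<and> x (int p))"
    have q: "0 < q" "x (int q)" using LeastI_ex[OF ex] unfolding q_def by auto
    have "q \<le> p" unfolding q_def using p \<open>x (int p)\<close> by (auto intro: Least_le)
    have before_q: "\<not> x k" if "0 < k" "k < int q" for k
      using not_less_Least[of "nat k" "\<lambda>p. 0 < p \<and> x (int p)"] that
      unfolding q_def[symmetric] by auto
    have "a + 1 < q" using zeros q by (meson not_le)
    have "nat (int q - 0 - 1) \<in> S"
      using \<open>0 < q\<close> by (intro gap_shift_gap_in[OF xX _ x0 q(2) before_q]) simp
    then have "q - 1 \<in> S" by (simp add: nat_diff_distrib')
    then show False using gap \<open>a + 1 < q\<close> \<open>q \<le> p\<close> p by fastforce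
  qed
  then show "x \<in> cyl (gap_shift S) (indicator_word (b + 1) 0)"
    unfolding cyl_def using xX x0 by (auto simp: less_Suc_eq_le)
qed

theorem corollary3p16:
  fixes S :: "nat set"
  assumes "S \<subseteq> {1..}"
    and "infinite S"
    and "\<forall>B::nat. \<exists>i. enumerate S (Suc i) - enumerate S i > B"
  shows "\<not> (\<exists>\<mu>. is_gibbs_state (gap_shift S) \<mu>)"
proof
  assume "\<exists>\<mu>. is_gibbs_state (gap_shift S) \<mu>"
  then obtain \<mu> where gibbs: "is_gibbs_state (gap_shift S) \<mu>" ..
  obtain C where C: "\<forall>v\<in>lang (gap_shift S). \<forall>w\<in>lang (gap_shift S).
      cyl (gap_shift S) v \<subseteq> cyl (gap_shift S) w \<longrightarrow> real (length w) \<le> real (length v) + C"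
    using gibbs_cyl_subset_length_bound[OF gibbs gibbs_gap_shift_entropy_pos[OF gibbs]] by blast
  obtain i where i: "enumerate S (Suc i) - enumerate S i > nat \<lceil>C\<rceil> + 1"
    using assms(3) by blast
  let ?a = "enumerate S i" and ?b = "enumerate S (Suc i)"
  have "cyl (gap_shift S) (indicator_word (?a + 2) 0)
          \<subseteq> cyl (gap_shift S) (indicator_word (?b + 1) 0)"
    using cyl_gap_shift_subset enumerate_not_between[OF assms(2)] by blast
  moreover have "indicator_word r 0 \<in> lang (gap_shift S)" for r
    using indicator_word_in_words_of_len words_of_len_subset_lang by blast
  ultimately have "real (length (indicator_word (?b + 1) 0)) \<le> real (length (indicator_word (?a + 2) 0)) + C"
    using C by blast
  then have "real ?b \<le> real ?a + 1 + C" by simp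
  moreover have "C \<le> real (nat \<lceil>C\<rceil>)" by (rule real_nat_ceiling_ge)
  ultimately show False using i by linarith
qed

end
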